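(* Let $G\subset\operatorname{SL}(n,\mathbb{k})$ be a finite abelian subgroup and let $\mathscr{E}=(E_\rho:\rho\in G^* )$ be the collection of modules of semi-invariants on $X=\mathbb{A}^n_{\mathbb{k}}/G$. Then the toric algebra $A_{\mathscr{E}}$ is consistent, i.e. $J_W=J_{\mathscr{E}}$.
   Context: $\mathbb{k}$ is an algebraically closed field whose characteristic does not divide $|G|$; $G$ is taken to consist of diagonal matrices, and $\rho_i\in G^*=\operatorname{Hom}(G,\mathbb{k}^\times)$ is the $i$-th diagonal entry. $G$ acts on $\mathbb{k}[x_1,\dots,x_n]$ with $x_i$ of weight $\rho_i$; $R=\mathbb{k}[x_1,\dots,x_n]^G$, $X=\operatorname{Spec}R$ (a Gorenstein affine toric variety with Cox ring $\mathbb{k}[x_1,\dots,x_n]$ and $\operatorname{Cl}(X)\cong G^*$), and $E_\rho$ is the $R$-module spanned by semi-invariant polynomials of weight $\rho$ ($E_{1}=R$). The quiver of sections of $\mathscr{E}$ is the McKay quiver $Q$: vertices $G^*$ and arrows $a_i^\rho:\rho\to\rho\rho_i$ with label monomial $x_i$, for $\rho\in G^*$, $1\le i\le n$ (paths composed right to left; the label of a path is the product of labels of its arrows). $J_{\mathscr{E}}$ is the two-sided ideal of $\mathbb{k}Q$ generated by $p^+-p^-$ for all pairs of paths with equal head, tail and label monomial; it is generated by $a_i^{\rho\rho_j}a_j^\rho-a_j^{\rho\rho_i}a_i^\rho$. A cycle is anticanonical if its label is $x_1x_2\cdots x_n$. For a path $q$, $\partial_qW$ is the sum of all paths $p$ with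 $pq$ an anticanonical cycle; $\mathscr{P}$ is the set of paths $q$ with $\partial_qW$ a sum of precisely two paths sharing neither initial nor final arrow; $J_W$ is generated by $p^+-p^-$ whenever $\partial_qW=p^++p^-$ with $q\in\mathscr{P}$. Consistency means $J_W=J_{\mathscr{E}}$. *)

theory Defs
  imports "HOL-Computational_Algebra.Polynomial" "HOL-Library.FuncSet"
begin

text \<open>A finite abelian subgroup of SL(n,k) consisting of diagonal matrices; a diagonal
matrix is represented by the list of its diagonal entries (length n).
Coordinates are indexed 0..n-1.\<close>

definition diag_SL_group :: "nat \<Rightarrow> 'k::field list set \<Rightarrow> bool" where
  "diag_SL_group n G \<longleftrightarrow> finite G \<and> replicate n 1 \<in> G \<and>
     (\<forall>g\<in>G. length g = n \<and> (\<forall>x\<in>set g. x \<noteq> 0) \<and> prod_list g = 1) \<and>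
     (\<forall>g\<in>G. \<forall>h\<in>G. map2 (*) g h \<in> G) \<and>
     (\<forall>g\<in>G. map inverse g \<in> G)"

definition chars :: "'k::field list set \<Rightarrow> ('k list \<Rightarrow> 'k) set" where
  "chars G = {\<chi>. \<chi> \<in> extensional G \<and> (\<forall>g\<in>G. \<chi> g \<noteq> 0) \<and>
                 (\<forall>g\<in>G. \<forall>h\<in>G. \<chi> (map2 (*) g h) = \<chi> g * \<chi> h)}"

definition chmul :: "'k::field list set \<Rightarrow> ('k list \<Rightarrow> 'k) \<Rightarrow> ('k list \<Rightarrow> 'k) \<Rightarrow> ('k list \<Rightarrow> 'k)" where
  "chmul G \<chi> \<psi> = (\<lambda>g\<in>G. \<chi> g * \<psi> g)"

definition rho :: "'k::field list set \<Rightarrow> nat \<Rightarrow> ('k list \<Rightarrow> 'k)" where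
  "rho G i = (\<lambda>g\<in>G. g ! i)"

text \<open>Paths in the McKay quiver: a tail vertex together with the list of arrow indices
in the order in which they are traversed.  The arrow with index i leaving vertex
\<rho> is a_i^\<rho> : \<rho> \<rightarrow> \<rho> \<rho>_i, labelled x_i.\<close>

type_synonym 'k path = "('k list \<Rightarrow> 'k) \<times> nat list"

definition ptail :: "'k path \<Rightarrow> ('k list \<Rightarrow> 'k)" where
  "ptail p = fst p"

definition phead :: "'k::field list set \<Rightarrow> 'k path \<Rightarrow> ('k list \<Rightarrow> 'k)" where
  "phead G p = foldl (\<lambda>\<chi> i. chmul G \<chi> (rho G i)) (fst p) (snd p)"

text \<open>The label monomial x^a of a path, as the multiset a of variable indices.\<close>
definition plabel :: "'k path \<Rightarrow> nat multiset" where
  "plabel p = mset (snd p)"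

definition valid_path :: "nat \<Rightarrow> 'k::field list set \<Rightarrow> 'k path \<Rightarrow> bool" where
  "valid_path n G p \<longleftrightarrow> fst p \<in> chars G \<and> (\<forall>i\<in>set (snd p). i < n)"

text \<open>Composition p q (q first, then p), defined when head q = tail p.\<close>
definition pcomp :: "'k::field list set \<Rightarrow> 'k path \<Rightarrow> 'k path \<Rightarrow> 'k path option" where
  "pcomp G p q = (if phead G q = ptail p then Some (fst q, snd q @ snd p) else None)"

text \<open>The path algebra kQ: finitely supported k-valued functions on paths.\<close>
definition path_alg :: "nat \<Rightarrow> 'k::field list set \<Rightarrow> ('k path \<Rightarrow> 'k) set" where
  "path_alg n G = {f. finite {p. f p \<noteq> 0} \<and> (\<forall>p. f p \<noteq> 0 \<longrightarrow> valid_path n G p)}"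

definition pbasis :: "'k path \<Rightarrow> ('k path \<Rightarrow> 'k::field)" where
  "pbasis p = (\<lambda>r. if r = p then 1 else 0)"

definition pmul :: "'k::field list set \<Rightarrow> ('k path \<Rightarrow> 'k) \<Rightarrow> ('k path \<Rightarrow> 'k) \<Rightarrow> ('k path \<Rightarrow> 'k)" where
  "pmul G f h = (\<lambda>r. \<Sum>(p, q)\<in>{(p, q). f p \<noteq> 0 \<and> h q \<noteq> 0 \<and> pcomp G p q = Some r}. f p * h q)"

inductive_set ideal_gen :: "nat \<Rightarrow> 'k::field list set \<Rightarrow> ('k path \<Rightarrow> 'k) set \<Rightarrow> ('k path \<Rightarrow> 'k) set"
  for n G S where
  zero: "(\<lambda>_. 0) \<in> ideal_gen n G S"
| gen: "s \<in> S \<Longrightarrow> s \<in> ideal_gen n G S"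
| add: "a \<in> ideal_gen n G S \<Longrightarrow> b \<in> ideal_gen n G S \<Longrightarrow> (\<lambda>r. a r + b r) \<in> ideal_gen n G S"
| smult: "a \<in> ideal_gen n G S \<Longrightarrow> (\<lambda>r. c * a r) \<in> ideal_gen n G S"
| lmult: "a \<in> ideal_gen n G S \<Longrightarrow> u \<in> path_alg n G \<Longrightarrow> pmul G u a \<in> ideal_gen n G S"
| rmult: "a \<in> ideal_gen n G S \<Longrightarrow> u \<in> path_alg n G \<Longrightarrow> pmul G a u \<in> ideal_gen n G S"

definition JE_gens :: "nat \<Rightarrow> 'k::field list set \<Rightarrow> ('k path \<Rightarrow> 'k) set" where
  "JE_gens n G = {(\<lambda>r. pbasis pp r - pbasis pm r) | pp pm.
      valid_path n G pp \<and> valid_path n G pm \<and> ptail pp = ptail pm \<and>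
      phead G pp = phead G pm \<and> plabel pp = plabel pm}"

definition anticanonical :: "nat \<Rightarrow> 'k::field list set \<Rightarrow> 'k path \<Rightarrow> bool" where
  "anticanonical n G c \<longleftrightarrow> valid_path n G c \<and> phead G c = ptail c \<and> plabel c = mset [0..<n]"

text \<open>\<partial>_q W : the sum of all paths p such that p q is an anticanonical cycle.\<close>
definition dW :: "nat \<Rightarrow> 'k::field list set \<Rightarrow> 'k path \<Rightarrow> ('k path \<Rightarrow> 'k)" where
  "dW n G q = (\<lambda>p. if valid_path n G p \<and> (\<exists>c. pcomp G p q = Some c \<and> anticanonical n G c)
                 then 1 else 0)"

definition two_term :: "nat \<Rightarrow> 'k::field list set \<Rightarrow> 'k path \<Rightarrow> 'k path \<Rightarrow> 'k path \<Rightarrow> bool" where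
  "two_term n G q pp pm \<longleftrightarrow> pp \<noteq> pm \<and> dW n G q = (\<lambda>r. pbasis pp r + pbasis pm r) \<and>
     snd pp \<noteq> [] \<and> snd pm \<noteq> [] \<and>
     \<not> (ptail pp = ptail pm \<and> hd (snd pp) = hd (snd pm)) \<and>
     \<not> (phead G pp = phead G pm \<and> last (snd pp) = last (snd pm))"

definition JW_gens :: "nat \<Rightarrow> 'k::field list set \<Rightarrow> ('k path \<Rightarrow> 'k) set" where
  "JW_gens n G = {(\<lambda>r. pbasis pp r - pbasis pm r) | q pp pm.
      valid_path n G q \<and> two_term n G q pp pm}"

end

theory Submission
  imports Defs
begin

text \<open>Paths with the same tail and the same label have the same head, so the generators of
  \<open>J\<^sub>\<E>\<close> are the differences of two paths from a common tail whose arrow sequences are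
  permutations of each other. Permutations are products of adjacent transpositions, and by
  multiplying on both sides it suffices to produce every commutator
  \<open>a\<^sub>j a\<^sub>i - a\<^sub>i a\<^sub>j\<close> (\<open>i \<noteq> j\<close>) in \<open>J\<^sub>W\<close>. For this let \<open>q\<close> traverse the remaining \<open>n - 2\<close>
  arrows starting at the head of \<open>a\<^sub>j a\<^sub>i\<close>: the only paths completing \<open>q\<close> to an
  anticanonical cycle are the two orderings of \<open>x\<^sub>i x\<^sub>j\<close>, so \<open>\<partial>\<^sub>qW\<close> is exactly that
  commutator. Conversely, the two terms of any \<open>\<partial>\<^sub>qW\<close> complete the same \<open>q\<close> to
  anticanonical cycles, hence have equal tail, head and label.\<close>

definition path_diff :: "'k path \<Rightarrow> 'k path \<Rightarrow> ('k path \<Rightarrow> 'k::field)" where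
  "path_diff p p' = (\<lambda>r. pbasis p r - pbasis p' r)"

lemma prod_list_map_mset_eq:
  "mset xs = mset ys \<Longrightarrow> prod_list (map f xs) = (prod_list (map f ys) :: 'a::comm_monoid_mult)"
  by (metis mset_map prod_mset_prod_list)

lemma phead_eq:
  assumes "v \<in> extensional G"
  shows "phead G (v, w) = (\<lambda>g\<in>G. v g * prod_list (map ((!) g) w))"
  using assms
proof (induction w arbitrary: v)
  case Nil
  then show ?case by (simp add: phead_def extensional_restrict)
next
  case (Cons i w)
  have step: "chmul G v (rho G i) = (\<lambda>g\<in>G. v g * g ! i)"
    by (simp add: chmul_def rho_def fun_eq_iff)
  have "phead G (v, i # w) = phead G (\<lambda>g\<in>G. v g * g ! i, w)"
    by (simp add: phead_def step)
  also have "\<dots> = (\<lambda>g\<in>G. v g * prod_list (map ((!) g) (i # w)))"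
    unfolding Cons.IH[OF restrict_extensional] by (intro restrict_ext) (simp add: mult.assoc)
  finally show ?case .
qed

lemma phead_append: "phead G (v, w @ w') = phead G (phead G (v, w), w')"
  by (simp add: phead_def)

lemma phead_mset_eq:
  assumes "v \<in> extensional G" and "mset w = mset w'"
  shows "phead G (v, w) = phead G (v, w')"
  using assms by (simp add: phead_eq prod_list_map_mset_eq[of w w'])

lemma phead_arrow_in_chars:
  assumes G: "diag_SL_group n G" and v: "v \<in> chars G" and i: "i < n"
  shows "phead G (v, [i]) \<in> chars G"
proof -
  have len: "length g = n" and nz: "g ! i \<noteq> 0" if "g \<in> G" for g
    using G that i by (auto simp: diag_SL_group_def)
  have "phead G (v, [i]) = (\<lambda>g\<in>G. v g * g ! i)"
    using v by (simp add: phead_eq chars_def)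
  moreover have "(\<lambda>g\<in>G. v g * g ! i) \<in> chars G"
    unfolding chars_def
  proof (intro CollectI conjI ballI)
    fix g h assume g: "g \<in> G" and h: "h \<in> G"
    have "map2 (*) g h \<in> G" and "map2 (*) g h ! i = g ! i * h ! i"
      using G g h len[OF g] len[OF h] i by (auto simp: diag_SL_group_def)
    with v g h show "(\<lambda>g\<in>G. v g * g ! i) (map2 (*) g h) =
        (\<lambda>g\<in>G. v g * g ! i) g * (\<lambda>g\<in>G. v g * g ! i) h"
      by (simp add: chars_def algebra_simps)
  qed (use v nz in \<open>auto simp: chars_def\<close>)
  ultimately show ?thesis by simp
qed

lemma phead_in_chars:
  assumes G: "diag_SL_group n G" and "v \<in> chars G" and "\<forall>i\<in>set w. i < n"
  shows "phead G (v, w) \<in> chars G"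
  using assms(2,3)
proof (induction w arbitrary: v)
  case Nil
  then show ?case by (simp add: phead_def)
next
  case (Cons i w)
  then show ?case
    using phead_append[of G v "[i]" w] phead_arrow_in_chars[OF G] by simp
qed

text \<open>This is where \<open>G \<subseteq> SL(n)\<close> enters: the character of \<open>x\<^sub>1\<cdots>x\<^sub>n\<close> is the determinant.\<close>

lemma phead_anticanonical_label:
  assumes G: "diag_SL_group n G" and v: "v \<in> chars G" and w: "mset w = mset [0..<n]"
  shows "phead G (v, w) = v"
proof -
  have ve: "v \<in> extensional G" using v by (simp add: chars_def)
  have "prod_list (map ((!) g) w) = 1" if g: "g \<in> G" for g
  proof -
    have "prod_list (map ((!) g) w) = prod_list (map ((!) g) [0..<n])"
      using w by (rule prod_list_map_mset_eq)
    also have "\<dots> = prod_list g"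
      using G g map_nth[of g] by (simp add: diag_SL_group_def)
    also have "\<dots> = 1" using G g by (simp add: diag_SL_group_def)
    finally show ?thesis .
  qed
  then have "phead G (v, w) = (\<lambda>g\<in>G. v g)"
    by (simp add: phead_eq[OF ve] cong: restrict_cong)
  then show ?thesis using ve by (simp add: extensional_restrict)
qed

lemma ideal_gen_subset:
  assumes "S \<subseteq> ideal_gen n G T"
  shows "ideal_gen n G S \<subseteq> ideal_gen n G T"
proof
  fix x assume "x \<in> ideal_gen n G S"
  then show "x \<in> ideal_gen n G T"
    by induction (use assms in \<open>auto intro: ideal_gen.intros\<close>)
qed

lemma path_diff_refl_in_ideal_gen: "path_diff p p \<in> ideal_gen n G S"
  using ideal_gen.zero by (simp add: path_diff_def)

lemma path_diff_trans_in_ideal_gen: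
  assumes "path_diff p p' \<in> ideal_gen n G S" and "path_diff p' p'' \<in> ideal_gen n G S"
  shows "path_diff p p'' \<in> ideal_gen n G S"
proof -
  have "(\<lambda>r. path_diff p p' r + path_diff p' p'' r) \<in> ideal_gen n G S"
    using assms by (rule ideal_gen.add)
  then show ?thesis by (simp add: path_diff_def)
qed

lemma pbasis_in_path_alg: "valid_path n G p \<Longrightarrow> pbasis p \<in> path_alg n G"
  by (auto simp: path_alg_def pbasis_def)

lemma path_diff_nonzero_iff: "p \<noteq> p' \<Longrightarrow> path_diff p p' r \<noteq> 0 \<longleftrightarrow> r = p \<or> r = p'"
  by (auto simp: path_diff_def pbasis_def)

lemma pmul_pbasis_path_diff:
  assumes "p \<noteq> p'" and "pcomp G u p = Some c" and "pcomp G u p' = Some c'"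
  shows "pmul G (pbasis u) (path_diff p p') = path_diff c c'"
proof
  fix r
  have S: "{(s, t). pbasis u s \<noteq> 0 \<and> path_diff p p' t \<noteq> 0 \<and> pcomp G s t = Some r} =
      (if c = r then {(u, p)} else {}) \<union> (if c' = r then {(u, p')} else {})"
    using assms by (auto simp: path_diff_nonzero_iff pbasis_def split: if_splits)
  show "pmul G (pbasis u) (path_diff p p') r = path_diff c c' r"
    unfolding pmul_def S using assms(1) by (auto simp: path_diff_def pbasis_def)
qed

lemma pmul_path_diff_pbasis:
  assumes "p \<noteq> p'" and "pcomp G p u = Some c" and "pcomp G p' u = Some c'"
  shows "pmul G (path_diff p p') (pbasis u) = path_diff c c'"
proof
  fix r
  have S: "{(s, t). path_diff p p' s \<noteq> 0 \<and> pbasis u t \<noteq> 0 \<and> pcomp G s t = Some r} =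
      (if c = r then {(p, u)} else {}) \<union> (if c' = r then {(p', u)} else {})"
    using assms by (auto simp: path_diff_nonzero_iff pbasis_def split: if_splits)
  show "pmul G (path_diff p p') (pbasis u) r = path_diff c c' r"
    unfolding pmul_def S using assms(1) by (auto simp: path_diff_def pbasis_def)
qed

lemma path_diff_append_in_ideal_gen:
  assumes "path_diff (v, w) (v, w') \<in> ideal_gen n G S"
    and "phead G (v, w) = phead G (v, w')" and "valid_path n G (phead G (v, w), s)"
  shows "path_diff (v, w @ s) (v, w' @ s) \<in> ideal_gen n G S"
proof (cases "w = w'")
  case False
  have "pcomp G (phead G (v, w), s) (v, w) = Some (v, w @ s)"
    and "pcomp G (phead G (v, w), s) (v, w') = Some (v, w' @ s)"
    using assms(2) by (simp_all add: pcomp_def ptail_def)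
  with False have "pmul G (pbasis (phead G (v, w), s)) (path_diff (v, w) (v, w')) =
      path_diff (v, w @ s) (v, w' @ s)"
    by (intro pmul_pbasis_path_diff) auto
  with ideal_gen.lmult[OF assms(1) pbasis_in_path_alg[OF assms(3)]] show ?thesis
    by simp
qed (simp add: path_diff_refl_in_ideal_gen)

lemma path_diff_prepend_in_ideal_gen:
  assumes "path_diff (phead G (v, u), w) (phead G (v, u), w') \<in> ideal_gen n G S"
    and "valid_path n G (v, u)"
  shows "path_diff (v, u @ w) (v, u @ w') \<in> ideal_gen n G S"
proof (cases "w = w'")
  case False
  have "pcomp G (phead G (v, u), w) (v, u) = Some (v, u @ w)"
    and "pcomp G (phead G (v, u), w') (v, u) = Some (v, u @ w')"
    by (simp_all add: pcomp_def ptail_def)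
  with False have "pmul G (path_diff (phead G (v, u), w) (phead G (v, u), w')) (pbasis (v, u)) =
      path_diff (v, u @ w) (v, u @ w')"
    by (intro pmul_path_diff_pbasis) auto
  with ideal_gen.rmult[OF assms(1) pbasis_in_path_alg[OF assms(2)]] show ?thesis
    by simp
qed (simp add: path_diff_refl_in_ideal_gen)

subsection \<open>Commutators from the superpotential\<close>

lemma mset_eq_pair_iff: "mset xs = {#i, j#} \<longleftrightarrow> xs = [i, j] \<or> xs = [j, i]"
proof
  assume h: "mset xs = {#i, j#}"
  then have "size (mset xs) = 2" by simp
  then have "length xs = 2" by simp
  then obtain a b where xs: "xs = [a, b]"
    by (auto simp: numeral_2_eq_2 length_Suc_conv)
  with h have "add_mset a {#b#} = add_mset i {#j#}" by simp
  with xs show "xs = [i, j] \<or> xs = [j, i]" by (auto simp: add_eq_conv_ex)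
qed auto

lemma anticanonical_completion_iff:
  assumes G: "diag_SL_group n G" and v: "v \<in> chars G"
    and i: "i < n" and j: "j < n" and "valid_path n G q"
    and qh: "phead G q = v" and ql: "mset (snd q) + {#i, j#} = mset [0..<n]"
  shows "valid_path n G p \<and> (\<exists>c. pcomp G p q = Some c \<and> anticanonical n G c) \<longleftrightarrow>
    p = (v, [i, j]) \<or> p = (v, [j, i])"
proof
  assume "valid_path n G p \<and> (\<exists>c. pcomp G p q = Some c \<and> anticanonical n G c)"
  then obtain c where pc: "pcomp G p q = Some c" and ac: "anticanonical n G c" by blast
  have "fst p = v" and "c = (fst q, snd q @ snd p)"
    using pc qh by (auto simp: pcomp_def ptail_def split: if_splits)
  moreover from this ac have "mset (snd q) + mset (snd p) = mset [0..<n]"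
    by (simp add: anticanonical_def plabel_def)
  with ql have "mset (snd p) = {#i, j#}"
    by (metis add_left_cancel)
  ultimately show "p = (v, [i, j]) \<or> p = (v, [j, i])"
    by (cases p) (simp add: mset_eq_pair_iff)
next
  assume p: "p = (v, [i, j]) \<or> p = (v, [j, i])"
  have c: "pcomp G p q = Some (fst q, snd q @ snd p)"
    using p qh by (auto simp: pcomp_def ptail_def)
  have cl: "mset (snd q @ snd p) = mset [0..<n]"
    using p ql by (auto simp: add.commute add_mset_commute)
  have qc: "fst q \<in> chars G" and "\<forall>k\<in>set (snd q). k < n"
    using \<open>valid_path n G q\<close> by (auto simp: valid_path_def)
  with p i j have "valid_path n G (fst q, snd q @ snd p)"
    by (auto simp: valid_path_def)
  moreover have "phead G (fst q, snd q @ snd p) = fst q"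
    using phead_anticanonical_label[OF G qc cl] .
  moreover have "plabel (fst q, snd q @ snd p) = mset [0..<n]"
    using cl by (simp only: plabel_def snd_conv)
  ultimately have "anticanonical n G (fst q, snd q @ snd p)"
    by (simp only: anticanonical_def ptail_def fst_conv)
  moreover have "valid_path n G p" using p v i j by (auto simp: valid_path_def)
  ultimately show "valid_path n G p \<and> (\<exists>c. pcomp G p q = Some c \<and> anticanonical n G c)"
    using c by blast
qed

lemma commutator_in_JW_gens:
  assumes G: "diag_SL_group n G" and v: "v \<in> chars G"
    and i: "i < n" and j: "j < n" and ij: "i \<noteq> j"
  shows "path_diff (v, [i, j]) (v, [j, i]) \<in> JW_gens n G"
proof -
  define ks where "ks = sorted_list_of_set ({0..<n} - {i, j})"
  define q where "q = (phead G (v, [i, j]), ks)"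
  have ks_mset: "mset ks = mset_set ({0..<n} - {i, j})"
    unfolding ks_def by (metis mset_sorted_list_of_multiset sorted_list_of_mset_set)
  have "{0..<n} = ({0..<n} - {i, j}) \<union> {i, j}"
    using i j by auto
  then have "mset [0..<n] = mset_set (({0..<n} - {i, j}) \<union> {i, j})"
    unfolding mset_upt by (rule arg_cong)
  also have "\<dots> = mset ks + {#i, j#}"
    using ij ks_mset by (subst mset_set_Union) auto
  finally have ql: "mset (snd q) + {#i, j#} = mset [0..<n]"
    by (simp add: q_def)
  have vq: "valid_path n G q"
    using phead_in_chars[OF G v] i j by (simp add: valid_path_def q_def ks_def)
  have "phead G q = phead G (v, [i, j] @ ks)"
    unfolding q_def by (rule phead_append[symmetric])
  also have "\<dots> = v"
    using ql by (intro phead_anticanonical_label[OF G v]) (simp add: q_def add.commute)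
  finally have qh: "phead G q = v" .
  have "dW n G q = (\<lambda>r. pbasis (v, [i, j]) r + pbasis (v, [j, i]) r)"
    unfolding dW_def anticanonical_completion_iff[OF G v i j vq qh ql]
    using ij by (auto simp: pbasis_def)
  then have "two_term n G q (v, [i, j]) (v, [j, i])"
    using ij by (simp add: two_term_def ptail_def)
  with vq show ?thesis
    unfolding JW_gens_def path_diff_def by blast
qed

subsection \<open>Permuting arrows modulo \<open>J\<^sub>W\<close>\<close>

lemma path_diff_swap_in_ideal_gen:
  assumes G: "diag_SL_group n G" and v: "v \<in> chars G" and i: "i < n" and j: "j < n"
    and s: "\<forall>k\<in>set s. k < n"
  shows "path_diff (v, i # j # s) (v, j # i # s) \<in> ideal_gen n G (JW_gens n G)"
proof (cases "i = j")
  case False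
  have "phead G (v, [i, j]) = phead G (v, [j, i])"
    using v by (intro phead_mset_eq) (auto simp: chars_def)
  moreover have "valid_path n G (phead G (v, [i, j]), s)"
    using phead_in_chars[OF G v] i j s by (simp add: valid_path_def)
  ultimately show ?thesis
    using path_diff_append_in_ideal_gen[OF ideal_gen.gen[OF commutator_in_JW_gens[OF G v i j False]]]
    by simp
qed (simp add: path_diff_refl_in_ideal_gen)

lemma path_diff_move_in_ideal_gen:
  assumes G: "diag_SL_group n G"
  shows "v \<in> chars G \<Longrightarrow> x < n \<Longrightarrow> \<forall>k\<in>set (a @ b). k < n \<Longrightarrow>
    path_diff (v, x # a @ b) (v, a @ x # b) \<in> ideal_gen n G (JW_gens n G)"
proof (induction a arbitrary: v)
  case Nil
  then show ?case by (simp add: path_diff_refl_in_ideal_gen)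
next
  case (Cons y a)
  have y: "y < n" using Cons.prems by simp
  have "path_diff (v, x # y # a @ b) (v, y # x # a @ b) \<in> ideal_gen n G (JW_gens n G)"
    using path_diff_swap_in_ideal_gen[OF G Cons.prems(1,2) y] Cons.prems(3) by simp
  moreover have "path_diff (v, [y] @ x # a @ b) (v, [y] @ a @ x # b) \<in> ideal_gen n G (JW_gens n G)"
    using Cons.prems phead_in_chars[OF G Cons.prems(1), of "[y]"]
    by (intro path_diff_prepend_in_ideal_gen Cons.IH) (auto simp: valid_path_def)
  ultimately show ?case
    by (auto intro: path_diff_trans_in_ideal_gen)
qed

lemma path_diff_perm_in_ideal_gen:
  assumes G: "diag_SL_group n G"
  shows "v \<in> chars G \<Longrightarrow> \<forall>k\<in>set w. k < n \<Longrightarrow> mset w = mset w' \<Longrightarrow>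
    path_diff (v, w) (v, w') \<in> ideal_gen n G (JW_gens n G)"
proof (induction w arbitrary: v w')
  case Nil
  then show ?case by (simp add: path_diff_refl_in_ideal_gen)
next
  case (Cons x w)
  have "x \<in> set w'" using Cons.prems(3) by (metis list.set_intros(1) set_mset_mset)
  then obtain a b where w': "w' = a @ x # b" by (meson split_list)
  have m: "mset w = mset (a @ b)" using Cons.prems(3) w' by simp
  have x: "x < n" and ab: "\<forall>k\<in>set (a @ b). k < n"
    using Cons.prems(2) m by (auto simp flip: set_mset_mset)
  have "path_diff (v, [x] @ w) (v, [x] @ a @ b) \<in> ideal_gen n G (JW_gens n G)"
    using Cons.prems phead_in_chars[OF G Cons.prems(1), of "[x]"] m
    by (intro path_diff_prepend_in_ideal_gen Cons.IH) (auto simp: valid_path_def)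
  moreover have "path_diff (v, x # a @ b) (v, a @ x # b) \<in> ideal_gen n G (JW_gens n G)"
    using path_diff_move_in_ideal_gen[OF G Cons.prems(1) x ab] .
  ultimately show ?case
    using w' by (auto intro: path_diff_trans_in_ideal_gen)
qed

lemma JE_gens_subset_ideal_gen_JW:
  assumes G: "diag_SL_group n G"
  shows "JE_gens n G \<subseteq> ideal_gen n G (JW_gens n G)"
proof
  fix f assume "f \<in> JE_gens n G"
  then obtain p p' where f: "f = path_diff p p'" and p: "valid_path n G p"
    and tail: "ptail p = ptail p'" and label: "plabel p = plabel p'"
    unfolding JE_gens_def path_diff_def by blast
  obtain v w w' where "p = (v, w)" and "p' = (v, w')"
    using tail by (cases p, cases p') (auto simp: ptail_def)
  with f p label show "f \<in> ideal_gen n G (JW_gens n G)"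
    using path_diff_perm_in_ideal_gen[OF G] by (simp add: valid_path_def plabel_def)
qed

lemma anticanonical_pcomp_phead:
  assumes "pcomp G p q = Some c" and "anticanonical n G c"
  shows "phead G p = ptail q"
proof -
  have "phead G q = ptail p" and c: "c = (fst q, snd q @ snd p)"
    using assms(1) by (auto simp: pcomp_def split: if_splits)
  then have "phead G c = phead G p"
    using phead_append[of G "fst q" "snd q" "snd p"] by (cases p) (simp add: ptail_def)
  with assms(2) c show ?thesis by (simp add: anticanonical_def ptail_def)
qed

lemma JW_gens_subset_JE_gens: "JW_gens n G \<subseteq> JE_gens n G"
proof
  fix f assume "f \<in> JW_gens n G"
  then obtain q p p' where f: "f = (\<lambda>r. pbasis p r - pbasis p' r)"
    and tt: "two_term n G q p p'"
    unfolding JW_gens_def by blast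
  have "dW n G q p = 1" "dW n G q p' = 1"
    using tt by (auto simp: two_term_def pbasis_def)
  then obtain c c' where p: "valid_path n G p" "pcomp G p q = Some c" "anticanonical n G c"
    and p': "valid_path n G p'" "pcomp G p' q = Some c'" "anticanonical n G c'"
    by (auto simp: dW_def split: if_splits)
  have "ptail p = ptail p'" and "c = (fst q, snd q @ snd p)" and "c' = (fst q, snd q @ snd p')"
    using p(2) p'(2) by (auto simp: pcomp_def split: if_splits)
  with p(3) p'(3) have "mset (snd q) + mset (snd p) = mset (snd q) + mset (snd p')"
    by (simp add: anticanonical_def plabel_def)
  then have "plabel p = plabel p'"
    by (simp add: plabel_def)
  moreover have "phead G p = phead G p'"
    using anticanonical_pcomp_phead p(2,3) p'(2,3) by metis
  ultimately show "f \<in> JE_gens n G"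
    unfolding JE_gens_def f using p(1) p'(1) \<open>ptail p = ptail p'\<close> by blast
qed

theorem proposition4p2:
  fixes G :: "'k::alg_closed_field list set" and n :: nat
  assumes "diag_SL_group n G"
    and "\<not> CHAR('k) dvd card G"
  shows "ideal_gen n G (JW_gens n G) = ideal_gen n G (JE_gens n G)"
proof
  show "ideal_gen n G (JW_gens n G) \<subseteq> ideal_gen n G (JE_gens n G)"
    using JW_gens_subset_JE_gens by (intro ideal_gen_subset) (auto intro: ideal_gen.gen)
  show "ideal_gen n G (JE_gens n G) \<subseteq> ideal_gen n G (JW_gens n G)"
    using JE_gens_subset_ideal_gen_JW[OF assms(1)] by (rule ideal_gen_subset)
qed

end
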